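(* Assume Setup (S). For every $n\ge 1$ and every $(\alpha_1,\dots,\alpha_{n+1})^T\in\mathbb{C}^{n+1}$ there exists $(\beta_1,\dots,\beta_{n+1})^T\in\mathbb{C}^{n+1}$ such that $R_n(\beta_1,\dots,\beta_{n+1})=\sum_{l=1}^{n+1}\alpha_l\,\chi_{B(l,n)}$.
   Context: Setup (S): Let $\mathfrak{A}=\varinjlim(\mathfrak{A}_n,\phi_n)$ be an AF C$^*$-algebra with $\mathfrak{A}_0=\mathbb{C}$, $\mathfrak{A}_n$ having exactly $n+1$ summands, $\phi_n$ unital injective $*$-homomorphisms with multiplicity matrices $\overline{A}_{n,n+1}\in M_{n+2,n+1}(\mathbb{N})$ ($(i,j)$ entry = multiplicity of summand $j$ of $\mathfrak{A}_n$ in summand $i$ of $\mathfrak{A}_{n+1}$), each of rank $n+1$. The Bratteli diagram has vertices $v(i,n)$, $1\le i\le n+1$, and $(\overline{A}_{n,n+1})_{ij}$ edges from $v(j,n)$ to $v(i,n+1)$. A minimal reduction is a subgraph with the same vertices, obtained by deleting edges only, in which for all $n\ge 0$ each vertex at level $n+1$ receives exactly one edge from level $n$ and each vertex at level $n$ emits at least one edge to level $n+1$. Fix a minimal reduction. Then for each $n\ge 1$ there are unique $1\le r'_n<r_n\le n+1$ and $1\le a_n\le n$ such that $v(r'_n,n)$ and $v(r_n,n)$ are the two vertices joined to $v(a_n,n-1)$, every other vertex of level $n-1$ being joined to exactly one vertex of level $n$; set $r_0=1$. $X_{min}$ is the set of infinite paths $(v(i_n,n))_{n\ge0}$, $i_0=1$,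 in the minimal reduction, with the topology having as clopen basis the nonempty sets $B(i,n)=\{\text{paths with }i_n=i\}$; it is a compact metrizable totally disconnected space. Define the linear map $R_n:\mathbb{C}^{n+1}\to C(X_{min},\mathbb{C})$ by $R_n(\alpha_1,\dots,\alpha_{n+1})=\sum_{l=0}^n\alpha_{l+1}\chi_{B(r_l,l)}$. *)

theory Defs
  imports "HOL-Analysis.Analysis"
begin

text \<open>Vertices v(i,n), 1 \<le> i \<le> n+1.
  A n i j = (A_{n,n+1})_{ij} = number of edges from v(j,n) to v(i,n+1) in the
  Bratteli diagram; e n i j = number of such edges kept in the minimal reduction.\<close>

definition bratteli_shape :: "(nat \<Rightarrow> nat \<Rightarrow> nat \<Rightarrow> nat) \<Rightarrow> bool" where
  "bratteli_shape A \<longleftrightarrow>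
     (\<forall>n i j. A n i j \<noteq> 0 \<longrightarrow> 1 \<le> i \<and> i \<le> n + 2 \<and> 1 \<le> j \<and> j \<le> n + 1)"

definition minimal_reduction ::
  "(nat \<Rightarrow> nat \<Rightarrow> nat \<Rightarrow> nat) \<Rightarrow> (nat \<Rightarrow> nat \<Rightarrow> nat \<Rightarrow> nat) \<Rightarrow> bool" where
  "minimal_reduction A e \<longleftrightarrow>
     (\<forall>n i j. e n i j \<le> A n i j) \<and>
     (\<forall>n. \<forall>i\<in>{1..n+2}. (\<Sum>j\<in>{1..n+1}. e n i j) = 1) \<and>
     (\<forall>n. \<forall>j\<in>{1..n+1}. (\<Sum>i\<in>{1..n+2}. e n i j) \<ge> 1)"

definition split_data :: "(nat \<Rightarrow> nat \<Rightarrow> nat \<Rightarrow> nat) \<Rightarrow> nat \<Rightarrow> nat \<Rightarrow> nat \<Rightarrow> nat \<Rightarrow> bool" where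
  "split_data e n r' r a \<longleftrightarrow>
     1 \<le> r' \<and> r' < r \<and> r \<le> n + 1 \<and> 1 \<le> a \<and> a \<le> n \<and>
     {i\<in>{1..n+1}. e (n - 1) i a \<noteq> 0} = {r', r} \<and>
     (\<forall>j\<in>{1..n}. j \<noteq> a \<longrightarrow> card {i\<in>{1..n+1}. e (n - 1) i j \<noteq> 0} = 1)"

definition r_seq :: "(nat \<Rightarrow> nat \<Rightarrow> nat \<Rightarrow> nat) \<Rightarrow> nat \<Rightarrow> nat" where
  "r_seq e n = (if n = 0 then 1 else (THE r. \<exists>r' a. split_data e n r' r a))"

text \<open>Infinite paths (v(i_n,n))_{n\<ge>0} with i_0 = 1 in the minimal reduction.\<close>
definition Xmin :: "(nat \<Rightarrow> nat \<Rightarrow> nat \<Rightarrow> nat) \<Rightarrow> (nat \<Rightarrow> nat) set" where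
  "Xmin e = {x. x 0 = 1 \<and> (\<forall>n. 1 \<le> x n \<and> x n \<le> n + 1 \<and> e n (x (Suc n)) (x n) \<noteq> 0)}"

definition Bset :: "(nat \<Rightarrow> nat \<Rightarrow> nat \<Rightarrow> nat) \<Rightarrow> nat \<Rightarrow> nat \<Rightarrow> (nat \<Rightarrow> nat) set" where
  "Bset e i n = {x\<in>Xmin e. x n = i}"

definition R_map :: "(nat \<Rightarrow> nat \<Rightarrow> nat \<Rightarrow> nat) \<Rightarrow> nat \<Rightarrow> (nat \<Rightarrow> complex) \<Rightarrow> (nat \<Rightarrow> nat) \<Rightarrow> complex" where
  "R_map e n \<alpha> = (\<lambda>x. \<Sum>l\<in>{0..n}. \<alpha> (l + 1) * indicator (Bset e (r_seq e l) l) x)"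

end

theory Submission
  imports Defs
begin

text \<open>The functions \<open>R\<^sub>n \<beta>\<close> on \<open>X_min\<close> form a linear space that contains \<open>\<chi> B(r_l,l)\<close> for
  \<open>l \<le> n\<close> and grows with \<open>n\<close>; by induction on \<open>n\<close> it contains every \<open>\<chi> B(i,n)\<close>. In the
  minimal reduction each vertex of level \<open>n+1\<close> has a unique parent, so the children sets of the
  \<open>n+1\<close> vertices of level \<open>n\<close> partition the \<open>n+2\<close> vertices of level \<open>n+1\<close> into nonempty
  blocks: exactly one vertex \<open>a\<close> has two children \<open>r' < r = r_(n+1)\<close>, every other vertex \<open>j\<close>
  has a single child \<open>i\<close>. Hence \<open>B(i,n+1) = B(j,n)\<close>, while \<open>B(a,n)\<close> is the disjoint union of
  \<open>B(r',n+1)\<close> and \<open>B(r,n+1)\<close>, so \<open>\<chi> B(r',n+1) = \<chi> B(a,n) - \<chi> B(r,n+1)\<close>.\<close>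

definition R_range :: "(nat \<Rightarrow> nat \<Rightarrow> nat \<Rightarrow> nat) \<Rightarrow> nat \<Rightarrow> ((nat \<Rightarrow> nat) \<Rightarrow> complex) set" where
  "R_range e n = {f. \<exists>\<beta>. \<forall>x\<in>Xmin e. R_map e n \<beta> x = f x}"

lemma R_range_cong:
  assumes "f \<in> R_range e n" and "\<And>x. x \<in> Xmin e \<Longrightarrow> g x = f x"
  shows "g \<in> R_range e n"
  using assms unfolding R_range_def by auto

lemma R_range_scale:
  assumes "f \<in> R_range e n"
  shows "(\<lambda>x. c * f x) \<in> R_range e n"
proof -
  obtain \<beta> where "\<forall>x\<in>Xmin e. R_map e n \<beta> x = f x"
    using assms unfolding R_range_def by blast
  moreover have "R_map e n (\<lambda>k. c * \<beta> k) x = c * R_map e n \<beta> x" for x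
    unfolding R_map_def by (simp only: sum_distrib_left mult.assoc)
  ultimately have "\<forall>x\<in>Xmin e. R_map e n (\<lambda>k. c * \<beta> k) x = c * f x"
    by simp
  then show ?thesis unfolding R_range_def by blast
qed

lemma R_range_diff:
  assumes "f \<in> R_range e n" and "g \<in> R_range e n"
  shows "(\<lambda>x. f x - g x) \<in> R_range e n"
proof -
  obtain \<beta> \<gamma> where "\<forall>x\<in>Xmin e. R_map e n \<beta> x = f x" "\<forall>x\<in>Xmin e. R_map e n \<gamma> x = g x"
    using assms unfolding R_range_def by blast
  moreover have "R_map e n (\<lambda>k. \<beta> k - \<gamma> k) x = R_map e n \<beta> x - R_map e n \<gamma> x" for x
    unfolding R_map_def by (simp add: sum_subtractf left_diff_distrib)
  ultimately have "\<forall>x\<in>Xmin e. R_map e n (\<lambda>k. \<beta> k - \<gamma> k) x = f x - g x"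
    by simp
  then show ?thesis unfolding R_range_def by blast
qed

lemma R_range_sum:
  assumes "finite S" and "\<And>l. l \<in> S \<Longrightarrow> f l \<in> R_range e n"
  shows "(\<lambda>x. \<Sum>l\<in>S. f l x) \<in> R_range e n"
proof -
  obtain \<beta> where \<beta>: "\<forall>l\<in>S. \<forall>x\<in>Xmin e. R_map e n (\<beta> l) x = f l x"
    using bchoice[of S "\<lambda>l \<beta>. \<forall>x\<in>Xmin e. R_map e n \<beta> x = f l x"] assms(2)
    unfolding R_range_def by blast
  have "R_map e n (\<lambda>k. \<Sum>l\<in>S. \<beta> l k) x = (\<Sum>l\<in>S. R_map e n (\<beta> l) x)" for x
    unfolding R_map_def by (simp add: sum_distrib_right sum.swap[of _ S])
  then have "\<forall>x\<in>Xmin e. R_map e n (\<lambda>k. \<Sum>l\<in>S. \<beta> l k) x = (\<Sum>l\<in>S. f l x)"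
    using \<beta> by simp
  then show ?thesis unfolding R_range_def by blast
qed

lemma R_range_mono: "R_range e n \<subseteq> R_range e (Suc n)"
proof
  fix f assume "f \<in> R_range e n"
  then obtain \<beta> where "\<forall>x\<in>Xmin e. R_map e n \<beta> x = f x"
    unfolding R_range_def by blast
  then have "\<forall>x\<in>Xmin e. R_map e (Suc n) (\<beta>(n + 2 := 0)) x = f x"
    by (simp add: R_map_def)
  then show "f \<in> R_range e (Suc n)" unfolding R_range_def by blast
qed

lemma indicator_Bset_r_seq_in_R_range: "indicator (Bset e (r_seq e n) n) \<in> R_range e n"
proof -
  have "R_map e n (\<lambda>k. if k = n + 1 then 1 else 0) x = indicator (Bset e (r_seq e n) n) x" for x
    unfolding R_map_def by (simp add: if_distrib[of "\<lambda>c. c * _"] sum.delta cong: if_cong)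
  then show ?thesis unfolding R_range_def by blast
qed

lemma disjoint_family_card_UN_Suc_doubleton:
  assumes "finite I" and "\<And>i. i \<in> I \<Longrightarrow> finite (C i) \<and> C i \<noteq> {}"
    and "disjoint_family_on C I" and "card (\<Union>i\<in>I. C i) = Suc (card I)"
  shows "\<exists>a\<in>I. card (C a) = 2 \<and> (\<forall>j\<in>I. j \<noteq> a \<longrightarrow> card (C j) = 1)"
proof -
  have pos: "card (C i) \<ge> 1" if "i \<in> I" for i
    using assms(2)[OF that] by (simp add: Suc_le_eq card_gt_0_iff)
  have "Suc (card I) = (\<Sum>i\<in>I. card (C i))"
    using assms by (simp add: card_UN_disjoint disjoint_family_on_def flip: assms(4))
  also have "\<dots> = (\<Sum>i\<in>I. (card (C i) - 1) + 1)"
    using pos by (intro sum.cong) (simp_all add: Suc_le_eq)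
  also have "\<dots> = (\<Sum>i\<in>I. card (C i) - 1) + card I"
    unfolding sum.distrib by simp
  finally have "(\<Sum>i\<in>I. card (C i) - 1) = 1" by simp
  then have "\<exists>a\<in>I. card (C a) - 1 = 1 \<and> (\<forall>j\<in>I. a \<noteq> j \<longrightarrow> card (C j) - 1 = 0)"
    by (simp only: sum_eq_1_iff[OF assms(1)])
  then obtain a where a: "a \<in> I" "card (C a) - 1 = 1"
    and others: "\<And>j. j \<in> I \<Longrightarrow> a \<noteq> j \<Longrightarrow> card (C j) - 1 = 0"
    by blast
  show ?thesis
  proof (intro bexI conjI ballI impI)
    show "card (C a) = 2" using a(2) by simp
    show "card (C j) = 1" if "j \<in> I" "j \<noteq> a" for j
      using others[OF that(1)] pos[OF that(1)] that(2) by simp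
  qed (fact a(1))
qed

definition children :: "(nat \<Rightarrow> nat \<Rightarrow> nat \<Rightarrow> nat) \<Rightarrow> nat \<Rightarrow> nat \<Rightarrow> nat set" where
  "children e m j = {i\<in>{1..m + 2}. e m i j \<noteq> 0}"

lemma split_data_Suc_iff:
  "split_data e (Suc m) r' r a \<longleftrightarrow>
     1 \<le> r' \<and> r' < r \<and> r \<le> m + 2 \<and> a \<in> {1..m + 1} \<and> children e m a = {r', r} \<and>
     (\<forall>j\<in>{1..m + 1}. j \<noteq> a \<longrightarrow> card (children e m j) = 1)"
  unfolding split_data_def children_def by auto

lemma split_data_unique:
  assumes "split_data e n r\<^sub>1' r\<^sub>1 a\<^sub>1" and "split_data e n r\<^sub>2' r\<^sub>2 a\<^sub>2"
  shows "r\<^sub>1 = r\<^sub>2"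
proof -
  have "a\<^sub>1 = a\<^sub>2"
  proof (rule ccontr)
    assume "a\<^sub>1 \<noteq> a\<^sub>2"
    moreover have "a\<^sub>2 \<in> {1..n}"
      using assms(2) unfolding split_data_def by auto
    ultimately have "card {i\<in>{1..n + 1}. e (n - 1) i a\<^sub>2 \<noteq> 0} = 1"
      using assms(1) unfolding split_data_def by auto
    moreover have "{i\<in>{1..n + 1}. e (n - 1) i a\<^sub>2 \<noteq> 0} = {r\<^sub>2', r\<^sub>2}" "r\<^sub>2' < r\<^sub>2"
      using assms(2) unfolding split_data_def by auto
    ultimately show False by simp
  qed
  then have "{r\<^sub>1', r\<^sub>1} = {r\<^sub>2', r\<^sub>2}" "r\<^sub>1' < r\<^sub>1" "r\<^sub>2' < r\<^sub>2"
    using assms unfolding split_data_def by auto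
  then show ?thesis by (metis doubleton_eq_iff less_asym)
qed

lemma Xmin_child:
  assumes "x \<in> Xmin e"
  shows "x (Suc m) \<in> children e m (x m)"
  using assms unfolding Xmin_def children_def by auto

context
  fixes A e :: "nat \<Rightarrow> nat \<Rightarrow> nat \<Rightarrow> nat"
  assumes shape: "bratteli_shape A" and reduction: "minimal_reduction A e"
begin

lemma edge_bounds:
  assumes "e m i j \<noteq> 0"
  shows "i \<in> {1..m + 2}" and "j \<in> {1..m + 1}"
proof -
  have "A m i j \<noteq> 0"
    using reduction assms unfolding minimal_reduction_def by (metis le_zero_eq)
  then show "i \<in> {1..m + 2}" and "j \<in> {1..m + 1}"
    using shape unfolding bratteli_shape_def by auto
qed

lemma parent_unique:
  assumes "e m i j \<noteq> 0" and "e m i j' \<noteq> 0"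
  shows "j = j'"
proof (rule ccontr)
  assume "j \<noteq> j'"
  then have "e m i j + e m i j' \<le> (\<Sum>k\<in>{1..m + 1}. e m i k)"
    using sum_mono2[of "{1..m + 1}" "{j, j'}" "e m i"] edge_bounds assms by simp
  also have "\<dots> = 1"
    using reduction edge_bounds(1)[OF assms(1)] unfolding minimal_reduction_def by blast
  finally show False using assms by simp
qed

lemma parent_exists:
  assumes "i \<in> {1..m + 2}"
  obtains j where "j \<in> {1..m + 1}" and "i \<in> children e m j"
proof -
  have "(\<Sum>k\<in>{1..m + 1}. e m i k) = 1"
    using reduction assms unfolding minimal_reduction_def by blast
  then obtain j where "j \<in> {1..m + 1}" "e m i j \<noteq> 0"
    by (metis sum.neutral zero_neq_one)
  then show thesis using that assms unfolding children_def by blast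
qed

lemma children_nonempty:
  assumes "j \<in> {1..m + 1}"
  shows "children e m j \<noteq> {}"
proof -
  have "(\<Sum>i\<in>{1..m + 2}. e m i j) \<ge> 1"
    using reduction assms unfolding minimal_reduction_def by blast
  then have "\<exists>i\<in>{1..m + 2}. e m i j \<noteq> 0"
    by (metis not_one_le_zero sum.neutral)
  then show ?thesis unfolding children_def by blast
qed

lemma children_partition:
  "disjoint_family_on (children e m) {1..m + 1}"
  "(\<Union>j\<in>{1..m + 1}. children e m j) = {1..m + 2}"
proof -
  show "disjoint_family_on (children e m) {1..m + 1}"
    unfolding disjoint_family_on_def children_def using parent_unique by blast
  show "(\<Union>j\<in>{1..m + 1}. children e m j) = {1..m + 2}"
  proof
    show "(\<Union>j\<in>{1..m + 1}. children e m j) \<subseteq> {1..m + 2}"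
      unfolding children_def by auto
    show "{1..m + 2} \<subseteq> (\<Union>j\<in>{1..m + 1}. children e m j)"
    proof
      fix i assume "i \<in> {1..m + 2}"
      then obtain j where "j \<in> {1..m + 1}" "i \<in> children e m j"
        by (rule parent_exists)
      then show "i \<in> (\<Union>j\<in>{1..m + 1}. children e m j)" by blast
    qed
  qed
qed

lemma split_data_exists: "\<exists>r' r a. split_data e (Suc m) r' r a"
proof -
  have blocks: "finite (children e m j) \<and> children e m j \<noteq> {}" if "j \<in> {1..m + 1}" for j
    using children_nonempty[OF that] by (simp add: children_def)
  have "card (\<Union>j\<in>{1..m + 1}. children e m j) = Suc (card {1..m + 1})"
    using children_partition(2) by simp
  then obtain a where a: "a \<in> {1..m + 1}" "card (children e m a) = 2"
    and single: "\<forall>j\<in>{1..m + 1}. j \<noteq> a \<longrightarrow> card (children e m j) = 1"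
    using disjoint_family_card_UN_Suc_doubleton[OF _ blocks children_partition(1)] by auto
  obtain p q where pq: "children e m a = {p, q}" "p < q"
  proof -
    obtain x y where "children e m a = {x, y}" "x \<noteq> y"
      using a(2) unfolding card_2_iff by blast
    then show thesis using that by (metis insert_commute linorder_neqE_nat)
  qed
  then have "1 \<le> p" "q \<le> m + 2" unfolding children_def by auto
  with a single pq have "split_data e (Suc m) p q a"
    unfolding split_data_Suc_iff by blast
  then show ?thesis by blast
qed

lemma split_data_r_seq:
  obtains r' a where "split_data e (Suc m) r' (r_seq e (Suc m)) a"
proof -
  obtain r' r a where split: "split_data e (Suc m) r' r a"
    using split_data_exists by blast
  have "(THE r. \<exists>r' a. split_data e (Suc m) r' r a) = r"
    by (rule the_equality) (use split split_data_unique in blast)+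
  then have "r_seq e (Suc m) = r"
    unfolding r_seq_def by simp
  then show thesis using that split by blast
qed

lemma Bset_eq_UN_children: "Bset e j m = (\<Union>i\<in>children e m j. Bset e i (Suc m))"
proof
  show "Bset e j m \<subseteq> (\<Union>i\<in>children e m j. Bset e i (Suc m))"
    using Xmin_child unfolding Bset_def by fastforce
  show "(\<Union>i\<in>children e m j. Bset e i (Suc m)) \<subseteq> Bset e j m"
  proof (rule UN_least)
    fix i assume "i \<in> children e m j"
    then have "e m i j \<noteq> 0" unfolding children_def by blast
    moreover have "e m i (x m) \<noteq> 0" if "x \<in> Bset e i (Suc m)" for x
      using that Xmin_child[of x e m] unfolding Bset_def children_def by auto
    ultimately show "Bset e i (Suc m) \<subseteq> Bset e j m"
      using parent_unique unfolding Bset_def by blast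
  qed
qed

lemma Bset_only_child:
  assumes "children e m j = {i}"
  shows "Bset e i (Suc m) = Bset e j m"
  using Bset_eq_UN_children[of j m] assms by simp

lemma indicator_Bset_split:
  assumes "children e m a = {r', r}" and "r' \<noteq> r"
  shows "indicator (Bset e r' (Suc m)) x
           = indicator (Bset e a m) x - (indicator (Bset e r (Suc m)) x :: 'a::ring_1)"
  using Bset_eq_UN_children[of a m] assms by (auto simp: Bset_def split: split_indicator)

lemma indicator_Bset_in_R_range:
  assumes "i \<in> {1..n + 1}"
  shows "indicator (Bset e i n) \<in> R_range e n"
  using assms
proof (induction n arbitrary: i)
  case 0
  then show ?case
    using indicator_Bset_r_seq_in_R_range[of e 0] by (simp add: r_seq_def)
next
  case (Suc m)
  define r where "r = r_seq e (Suc m)"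
  obtain r' a where "split_data e (Suc m) r' r a"
    unfolding r_def by (rule split_data_r_seq)
  then have r'r: "r' < r" and a: "a \<in> {1..m + 1}" and split: "children e m a = {r', r}"
    and single: "\<And>j. j \<in> {1..m + 1} \<Longrightarrow> j \<noteq> a \<Longrightarrow> card (children e m j) = 1"
    unfolding split_data_Suc_iff by auto
  have r: "indicator (Bset e r (Suc m)) \<in> R_range e (Suc m)"
    unfolding r_def by (rule indicator_Bset_r_seq_in_R_range)
  have IH: "indicator (Bset e j m) \<in> R_range e (Suc m)" if "j \<in> {1..m + 1}" for j
    using Suc.IH[OF that] R_range_mono by blast
  from Suc.prems have "i \<in> {1..m + 2}" by simp
  then obtain j where j: "j \<in> {1..m + 1}" "i \<in> children e m j"
    by (rule parent_exists)
  show ?case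
  proof (cases "j = a")
    case True
    with j split consider "i = r'" | "i = r" by blast
    then show ?thesis
    proof cases
      case 1
      then show ?thesis
        using R_range_diff[OF IH[OF a] r] indicator_Bset_split[OF split] r'r
        by (auto intro: R_range_cong)
    qed (use r in simp)
  next
    case False
    then have "children e m j = {i}"
      using single[OF j(1)] j(2) by (metis card_1_singletonE singletonD)
    then show ?thesis
      using IH[OF j(1)] Bset_only_child by simp
  qed
qed

end

theorem lemma4p1:
  fixes A e :: "nat \<Rightarrow> nat \<Rightarrow> nat \<Rightarrow> nat"
  assumes "bratteli_shape A"
    and "minimal_reduction A e"
  shows "\<forall>n\<ge>1. \<forall>\<alpha> :: nat \<Rightarrow> complex. \<exists>\<beta> :: nat \<Rightarrow> complex.
           \<forall>x\<in>Xmin e. R_map e n \<beta> x = (\<Sum>l\<in>{1..n+1}. \<alpha> l * indicator (Bset e l n) x)"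
proof (intro allI impI)
  fix n :: nat and \<alpha> :: "nat \<Rightarrow> complex"
  have "(\<lambda>x. \<Sum>l\<in>{1..n+1}. \<alpha> l * indicator (Bset e l n) x) \<in> R_range e n"
    using indicator_Bset_in_R_range[OF assms] by (intro R_range_sum R_range_scale) auto
  then show "\<exists>\<beta>. \<forall>x\<in>Xmin e. R_map e n \<beta> x = (\<Sum>l\<in>{1..n+1}. \<alpha> l * indicator (Bset e l n) x)"
    unfolding R_range_def by blast
qed

end
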